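(* Let $\mathbb{F}$ be a field, let $A$ be a matrix over $\mathbb{F}$ with $n$ columns, and let $B$ be a matrix over $\mathbb{F}$ with $n$ columns whose row space is the orthogonal complement $W^\perp=\{x\in\mathbb{F}^n: x\cdot w=0\ \forall w\in W\}$ of the row space $W$ of $A$ (so that $M(B)$ represents the dual matroid $M(A)^*$). Then $\mathrm{csd}(M(A))=\mathrm{dsd}(M(B))$.
   Context: Here $x\cdot w=\sum_i x_iw_i$. $M(A)$ is the column matroid of $A$ (ground set: the columns, indexed by $\{1,\dots,n\}$; independent sets: linearly independent sets of columns). A matroid is connected if any two elements lie in a common circuit; components are maximal connected restrictions. Contraction$^*$-depth: for a matrix $A$ with $m$ rows and a subspace $K\subseteq\mathbb{F}^m$, let $M(A,K)$ be the matroid on the columns where a set $\{u_1,\dots,u_\ell\}$ is dependent iff some $\sum\alpha_iu_i\in K$ with not all $\alpha_i=0$. Set $\mathrm{csd}(A,K)=0$ if $M(A,K)$ has rank $0$; otherwise if $M(A,K)$ is disconnected, $\mathrm{csd}(A,K)=\max_C \mathrm{csd}(A_C,K)$ over components $C$ ($A_C$ the submatrix of columns in $C$); otherwise $\mathrm{csd}(A,K)=1+\min_{v\in\mathbb{F}^m}\mathrm{csd}(A,K+\mathrm{span}(v))$; and $\mathrm{csd}(M(A))=\mathrm{csd}(A,\{0\})$. Deletion$^*$-depth: for a matrix $B$ with $n$ columns, $\mathrm{dsd}(M(B))=0$ if the rank of $M(B)$ equals its number of elements; otherwise if $M(B)$ is disconnected, $\mathrm{dsd}(M(B))$ is the maximum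 of $\mathrm{dsd}(M(B_C))$ over the components $C$; otherwise $\mathrm{dsd}(M(B))=1+\min_{v\in\mathbb{F}^n}\mathrm{dsd}(M(B\oplus v^\top))$, where $B\oplus v^\top$ is $B$ with the row $v^\top$ appended. *)

theory Defs
  imports "Jordan_Normal_Form.Matrix"
begin

text \<open>Matrices are Jordan_Normal_Form matrices over a field; columns of A are indexed by
  0..<dim_col A. A column submatrix A_C is represented by the pair (A, C) with C a set of
  column indices.\<close>

definition lincomb_cols :: "'a::field mat \<Rightarrow> (nat \<Rightarrow> 'a) \<Rightarrow> nat set \<Rightarrow> 'a vec" where
  "lincomb_cols A \<alpha> S = vec (dim_row A) (\<lambda>r. \<Sum>i\<in>S. \<alpha> i * A $$ (r, i))"

definition mdep :: "'a::field mat \<Rightarrow> 'a vec set \<Rightarrow> nat set \<Rightarrow> bool" where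
  "mdep A K S \<longleftrightarrow> (\<exists>\<alpha>. (\<exists>i\<in>S. \<alpha> i \<noteq> 0) \<and> lincomb_cols A \<alpha> S \<in> K)"

definition mindep :: "'a::field mat \<Rightarrow> 'a vec set \<Rightarrow> nat set \<Rightarrow> bool" where
  "mindep A K S \<longleftrightarrow> \<not> mdep A K S"

definition mrank :: "'a::field mat \<Rightarrow> 'a vec set \<Rightarrow> nat set \<Rightarrow> nat" where
  "mrank A K E = Max {card S | S. S \<subseteq> E \<and> mindep A K S}"

definition mcircuit :: "'a::field mat \<Rightarrow> 'a vec set \<Rightarrow> nat set \<Rightarrow> bool" where
  "mcircuit A K S \<longleftrightarrow> mdep A K S \<and> (\<forall>T. T \<subset> S \<longrightarrow> mindep A K T)"

definition mconnected :: "'a::field mat \<Rightarrow> 'a vec set \<Rightarrow> nat set \<Rightarrow> bool" where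
  "mconnected A K E \<longleftrightarrow>
     (\<forall>e\<in>E. \<forall>f\<in>E. e \<noteq> f \<longrightarrow> (\<exists>S. mcircuit A K S \<and> S \<subseteq> E \<and> e \<in> S \<and> f \<in> S))"

definition mcomponent :: "'a::field mat \<Rightarrow> 'a vec set \<Rightarrow> nat set \<Rightarrow> nat set \<Rightarrow> bool" where
  "mcomponent A K E C \<longleftrightarrow> C \<noteq> {} \<and> C \<subseteq> E \<and> mconnected A K C \<and>
     (\<forall>C'. C \<subset> C' \<and> C' \<subseteq> E \<longrightarrow> \<not> mconnected A K C')"

definition add_span :: "'a::field vec set \<Rightarrow> 'a vec \<Rightarrow> 'a vec set" where
  "add_span K v = {k + c \<cdot>\<^sub>v v | k c. k \<in> K}"

text \<open>csd_le A K E d  means  csd(A_E, K) \<le> d  (least fixed point reading of the recursion).\<close>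
inductive csd_le :: "'a::field mat \<Rightarrow> 'a vec set \<Rightarrow> nat set \<Rightarrow> nat \<Rightarrow> bool" for A where
  rank0: "mrank A K E = 0 \<Longrightarrow> csd_le A K E d"
| disc: "mrank A K E \<noteq> 0 \<Longrightarrow> \<not> mconnected A K E \<Longrightarrow>
          (\<forall>C. mcomponent A K E C \<longrightarrow> csd_le A K C d) \<Longrightarrow> csd_le A K E d"
| conn: "mrank A K E \<noteq> 0 \<Longrightarrow> mconnected A K E \<Longrightarrow> v \<in> carrier_vec (dim_row A) \<Longrightarrow>
          csd_le A (add_span K v) E d \<Longrightarrow> csd_le A K E (Suc d)"

definition csd :: "'a::field mat \<Rightarrow> nat" where
  "csd A = (LEAST d. csd_le A {0\<^sub>v (dim_row A)} {0..<dim_col A} d)"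

text \<open>dsd_le B E d  means  dsd(M(B_E)) \<le> d. M(B) is M(B,{0}).
  Appending a row v to B_E is represented by appending a row v \<in> F^n to B (entries of v
  outside E are irrelevant).\<close>
inductive dsd_le :: "'a::field mat \<Rightarrow> nat set \<Rightarrow> nat \<Rightarrow> bool" where
  indep: "mrank B {0\<^sub>v (dim_row B)} E = card E \<Longrightarrow> dsd_le B E d"
| disc: "mrank B {0\<^sub>v (dim_row B)} E \<noteq> card E \<Longrightarrow> \<not> mconnected B {0\<^sub>v (dim_row B)} E \<Longrightarrow>
          (\<forall>C. mcomponent B {0\<^sub>v (dim_row B)} E C \<longrightarrow> dsd_le B C d) \<Longrightarrow> dsd_le B E d"
| conn: "mrank B {0\<^sub>v (dim_row B)} E \<noteq> card E \<Longrightarrow> mconnected B {0\<^sub>v (dim_row B)} E \<Longrightarrow>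
          v \<in> carrier_vec (dim_col B) \<Longrightarrow>
          dsd_le (B @\<^sub>r mat_of_rows (dim_col B) [v]) E d \<Longrightarrow> dsd_le B E (Suc d)"

definition dsd :: "'a::field mat \<Rightarrow> nat" where
  "dsd B = (LEAST d. dsd_le B {0..<dim_col B} d)"

definition row_space :: "'a::field mat \<Rightarrow> 'a vec set" where
  "row_space A = {vec (dim_col A) (\<lambda>j. \<Sum>i<dim_row A. c i * A $$ (i, j)) | c. True}"

definition orth_compl :: "nat \<Rightarrow> 'a::field vec set \<Rightarrow> 'a vec set" where
  "orth_compl n W = {x \<in> carrier_vec n. \<forall>w\<in>W. x \<bullet> w = 0}"

end

theory Submission
  imports Defs
begin

text \<open>All matroids involved are matroids of coordinate subspaces: for a subspace X of
  functions supported on E, a set S is dependent iff some nonzero vector of X is supported on S.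
  The restriction of M(A,K) to E is the matroid of the space X of coefficient vectors x on E
  with x_1 a_1 + ... + x_n a_n in K, and the restriction of M(B) to E is that of the kernel of B.
  As long as the kernel of B is the orthogonal complement of X, the recursions defining csd and
  dsd run in lockstep: every element of M(A,K) is a loop iff the complement is zero, i.e. M(B) is
  free; two elements lie in a common circuit iff no separator (a set S such that restricting
  vectors of X to S stays in X) contains one but not the other, and X and its complement have
  the same separators, so the two matroids have the same components and restricting to a
  component preserves the duality; finally adding span v to K adjoins one vector u to X, which
  cuts the complement down to the vectors orthogonal to u, i.e. appends the row u to B.
  Initially the kernel of B is the complement of the kernel of A because the row space of B is
  the complement of the row space of A.\<close>

section \<open>Matroids of coordinate subspaces\<close>

definition supp_in :: "(nat \<Rightarrow> 'a::zero) \<Rightarrow> nat set \<Rightarrow> bool" where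
  "supp_in x S \<longleftrightarrow> (\<forall>i. i \<notin> S \<longrightarrow> x i = 0)"

definition restr0 :: "(nat \<Rightarrow> 'a::zero) \<Rightarrow> nat set \<Rightarrow> nat \<Rightarrow> 'a" where
  "restr0 x S = (\<lambda>i. if i \<in> S then x i else 0)"

definition unit_fun :: "nat \<Rightarrow> nat \<Rightarrow> 'a::zero_neq_one" where
  "unit_fun a = (\<lambda>i. if i = a then 1 else 0)"

definition coord_subspace :: "nat set \<Rightarrow> (nat \<Rightarrow> 'a::field) set \<Rightarrow> bool" where
  "coord_subspace E X \<longleftrightarrow> finite E \<and> (\<lambda>_. 0) \<in> X \<and> (\<forall>x\<in>X. supp_in x E) \<and>
     (\<forall>x\<in>X. \<forall>y\<in>X. (\<lambda>i. x i + y i) \<in> X) \<and> (\<forall>c. \<forall>x\<in>X. (\<lambda>i. c * x i) \<in> X)"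

definition supp_dep :: "(nat \<Rightarrow> 'a::zero) set \<Rightarrow> nat set \<Rightarrow> bool" where
  "supp_dep X S \<longleftrightarrow> (\<exists>x\<in>X. supp_in x S \<and> (\<exists>i\<in>S. x i \<noteq> 0))"

definition supp_circuit :: "(nat \<Rightarrow> 'a::zero) set \<Rightarrow> nat set \<Rightarrow> bool" where
  "supp_circuit X S \<longleftrightarrow> supp_dep X S \<and> (\<forall>T. T \<subset> S \<longrightarrow> \<not> supp_dep X T)"

definition circuit_linked :: "(nat \<Rightarrow> 'a::zero) set \<Rightarrow> nat \<Rightarrow> nat \<Rightarrow> bool" where
  "circuit_linked X e f \<longleftrightarrow> e = f \<or> (\<exists>S. supp_circuit X S \<and> e \<in> S \<and> f \<in> S)"

definition supp_connected :: "(nat \<Rightarrow> 'a::zero) set \<Rightarrow> nat set \<Rightarrow> bool" where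
  "supp_connected X C \<longleftrightarrow>
     (\<forall>e\<in>C. \<forall>f\<in>C. e \<noteq> f \<longrightarrow> (\<exists>S. supp_circuit X S \<and> S \<subseteq> C \<and> e \<in> S \<and> f \<in> S))"

definition supp_component :: "(nat \<Rightarrow> 'a::zero) set \<Rightarrow> nat set \<Rightarrow> nat set \<Rightarrow> bool" where
  "supp_component X E C \<longleftrightarrow> C \<noteq> {} \<and> C \<subseteq> E \<and> supp_connected X C \<and>
     (\<forall>C'. C \<subset> C' \<and> C' \<subseteq> E \<longrightarrow> \<not> supp_connected X C')"

definition separator :: "(nat \<Rightarrow> 'a::zero) set \<Rightarrow> nat set \<Rightarrow> bool" where
  "separator X S \<longleftrightarrow> (\<forall>x\<in>X. restr0 x S \<in> X)"

lemma coord_subspace_finite: "coord_subspace E X \<Longrightarrow> finite E"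
  unfolding coord_subspace_def by blast

lemma coord_subspace_zero: "coord_subspace E X \<Longrightarrow> (\<lambda>_. 0) \<in> X"
  unfolding coord_subspace_def by blast

lemma coord_subspace_supp: "coord_subspace E X \<Longrightarrow> x \<in> X \<Longrightarrow> supp_in x E"
  unfolding coord_subspace_def by blast

lemma coord_subspace_scale: "coord_subspace E X \<Longrightarrow> x \<in> X \<Longrightarrow> (\<lambda>i. c * x i) \<in> X"
  unfolding coord_subspace_def by blast

lemma coord_subspace_add_scaled:
  assumes "coord_subspace E X" "x \<in> X" "y \<in> X"
  shows "(\<lambda>i. x i + c * y i) \<in> X"
proof -
  have "\<forall>x\<in>X. \<forall>y\<in>X. (\<lambda>i. x i + y i) \<in> X" using assms(1) unfolding coord_subspace_def by blast
  from bspec[OF bspec[OF this assms(2)] coord_subspace_scale[OF assms(1,3)]] show ?thesis by simp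
qed

lemma coord_subspace_diff_scaled:
  assumes "coord_subspace E X" "x \<in> X" "y \<in> X"
  shows "(\<lambda>i. x i - c * y i) \<in> X"
  using coord_subspace_add_scaled[OF assms, of "- c"] by simp

lemma supp_dep_mono: "supp_dep X T \<Longrightarrow> T \<subseteq> S \<Longrightarrow> supp_dep X S"
  unfolding supp_dep_def supp_in_def by blast

lemma supp_circuit_vector:
  assumes "supp_circuit X S"
  shows "\<exists>x\<in>X. \<forall>i. x i \<noteq> 0 \<longleftrightarrow> i \<in> S"
proof -
  obtain x j where x: "x \<in> X" "supp_in x S" "j \<in> S" "x j \<noteq> 0"
    using assms unfolding supp_circuit_def supp_dep_def by blast
  have "x i \<noteq> 0" if "i \<in> S" for i
  proof
    assume "x i = 0"
    then have "supp_dep X (S - {i})"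
      using x unfolding supp_dep_def supp_in_def by (metis DiffI singletonD)
    with \<open>i \<in> S\<close> assms show False unfolding supp_circuit_def by blast
  qed
  with x show ?thesis unfolding supp_in_def by metis
qed

lemma supp_circuit_subset: "coord_subspace E X \<Longrightarrow> supp_circuit X S \<Longrightarrow> S \<subseteq> E"
  by (metis coord_subspace_supp subsetI supp_circuit_vector supp_in_def)

text \<open>If the support of x is not a circuit, a vector y of X with smaller support either is
  nonzero at h or cancels a coordinate of x other than h.\<close>

lemma supp_circuit_within:
  assumes X: "coord_subspace E X"
  shows "x \<in> X \<Longrightarrow> x h \<noteq> 0 \<Longrightarrow> \<exists>S. supp_circuit X S \<and> h \<in> S \<and> S \<subseteq> {i. x i \<noteq> 0}"
proof (induction "card {i. x i \<noteq> 0}" arbitrary: x h rule: less_induct)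
  case less
  let ?S = "{i. x i \<noteq> 0}"
  have "?S \<subseteq> E" using coord_subspace_supp[OF X less.prems(1)] unfolding supp_in_def by blast
  then have fin: "finite ?S" using coord_subspace_finite[OF X] by (rule finite_subset)
  have "supp_dep X ?S" using less.prems unfolding supp_dep_def supp_in_def by blast
  show ?case
  proof (cases "supp_circuit X ?S")
    case True
    with less.prems show ?thesis by blast
  next
    case False
    with \<open>supp_dep X ?S\<close> obtain T where T: "T \<subset> ?S" "supp_dep X T"
      unfolding supp_circuit_def by blast
    then obtain y j where y: "y \<in> X" "supp_in y T" "j \<in> T" "y j \<noteq> 0"
      unfolding supp_dep_def by blast
    have ysub: "{i. y i \<noteq> 0} \<subseteq> T" using y(2) unfolding supp_in_def by blast
    show ?thesis
    proof (cases "y h = 0")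
      case False
      have "card {i. y i \<noteq> 0} < card ?S"
        using ysub T(1) by (intro psubset_card_mono[OF fin]) blast
      from less.hyps[OF this y(1) False] ysub T(1) show ?thesis by blast
    next
      case True
      define x' where "x' = (\<lambda>i. x i - (x j / y j) * y i)"
      have x'X: "x' \<in> X" unfolding x'_def by (rule coord_subspace_diff_scaled[OF X less.prems(1) y(1)])
      have x'h: "x' h \<noteq> 0" unfolding x'_def using True less.prems(2) by simp
      have sub: "{i. x' i \<noteq> 0} \<subseteq> ?S - {j}"
        using y(4) ysub T(1) unfolding x'_def by auto
      have "card {i. x' i \<noteq> 0} < card ?S"
        using sub T(1) y(3) by (intro psubset_card_mono[OF fin]) blast
      from less.hyps[OF this x'X x'h] sub show ?thesis by blast
    qed
  qed
qed

lemma supp_circuit_strong_elim: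
  assumes X: "coord_subspace E X"
    and S: "supp_circuit X S1" "supp_circuit X S2" "g \<in> S1" "g \<in> S2" "h \<in> S2" "h \<notin> S1"
  obtains S3 where "supp_circuit X S3" "h \<in> S3" "S3 \<subseteq> S1 \<union> S2 - {g}" "S3 \<inter> (S1 - S2) \<noteq> {}"
proof -
  obtain x1 where x1: "x1 \<in> X" "\<And>i. x1 i \<noteq> 0 \<longleftrightarrow> i \<in> S1"
    using supp_circuit_vector[OF S(1)] by blast
  obtain x2 where x2: "x2 \<in> X" "\<And>i. x2 i \<noteq> 0 \<longleftrightarrow> i \<in> S2"
    using supp_circuit_vector[OF S(2)] by blast
  define z where "z = (\<lambda>i. x2 i - (x2 g / x1 g) * x1 i)"
  have zX: "z \<in> X" unfolding z_def by (rule coord_subspace_diff_scaled[OF X x2(1) x1(1)])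
  have zh: "z h \<noteq> 0" and zg: "z g = 0"
    unfolding z_def using x1(2)[of h] x1(2)[of g] x2(2)[of h] S(3-6) by auto
  have zsub: "{i. z i \<noteq> 0} \<subseteq> S1 \<union> S2 - {g}"
    using zg x1(2) x2(2) unfolding z_def by fastforce
  obtain S3 where S3: "supp_circuit X S3" "h \<in> S3" "S3 \<subseteq> S1 \<union> S2 - {g}"
    using supp_circuit_within[OF X zX zh] zsub by blast
  have "S3 \<inter> (S1 - S2) \<noteq> {}"
  proof
    assume "S3 \<inter> (S1 - S2) = {}"
    with S3(3) S(4) have "S3 \<subset> S2" by blast
    with S3(1) S(2) show False unfolding supp_circuit_def by blast
  qed
  with S3 that show thesis by blast
qed

text \<open>Strong circuit elimination yields circuits through e and through h inside
  S1 \<union> S2 - {g}; some pair among S1, S2 and these two meets and has a smaller union.\<close>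

lemma supp_circuits_meeting_shrink:
  assumes X: "coord_subspace E X"
    and S: "supp_circuit X S1" "supp_circuit X S2" "g \<in> S1" "g \<in> S2"
    and e: "e \<in> S1" "e \<notin> S2" and h: "h \<in> S2" "h \<notin> S1"
  obtains C C' where "supp_circuit X C" "supp_circuit X C'" "C \<inter> C' \<noteq> {}" "e \<in> C" "h \<in> C'"
    "C \<union> C' \<subset> S1 \<union> S2"
proof -
  obtain C3 where C3: "supp_circuit X C3" "h \<in> C3" "C3 \<subseteq> S1 \<union> S2 - {g}"
      "C3 \<inter> (S1 - S2) \<noteq> {}"
    by (rule supp_circuit_strong_elim[OF X S h])
  obtain C4 where C4: "supp_circuit X C4" "e \<in> C4" "C4 \<subseteq> S2 \<union> S1 - {g}"
      "C4 \<inter> (S2 - S1) \<noteq> {}"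
    by (rule supp_circuit_strong_elim[OF X S(2,1,4,3) e])
  consider "S1 \<union> C3 \<subset> S1 \<union> S2" | "C4 \<union> S2 \<subset> S1 \<union> S2" | "S1 - S2 \<subseteq> C4"
    using C3(3) C4(3) by blast
  then show thesis
  proof cases
    case 1
    moreover have "S1 \<inter> C3 \<noteq> {}" using C3(4) by blast
    ultimately show thesis using that[OF S(1) C3(1) _ e(1) C3(2)] by blast
  next
    case 2
    moreover have "C4 \<inter> S2 \<noteq> {}" using C4(4) by blast
    ultimately show thesis using that[OF C4(1) S(2) _ C4(2) h(1)] by blast
  next
    case 3
    with C3(4) have "C4 \<inter> C3 \<noteq> {}" by blast
    moreover have "C4 \<union> C3 \<subset> S1 \<union> S2" using C3(3) C4(3) S(3,4) by blast
    ultimately show thesis using that[OF C4(1) C3(1) _ C4(2) C3(2)] by blast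
  qed
qed

lemma supp_circuits_meeting_linked:
  assumes X: "coord_subspace E X"
  shows "supp_circuit X S1 \<Longrightarrow> supp_circuit X S2 \<Longrightarrow> S1 \<inter> S2 \<noteq> {} \<Longrightarrow> e \<in> S1 \<Longrightarrow> h \<in> S2 \<Longrightarrow>
    \<exists>S. supp_circuit X S \<and> e \<in> S \<and> h \<in> S"
proof (induction "card (S1 \<union> S2)" arbitrary: S1 S2 rule: less_induct)
  case less
  show ?case
  proof (cases "h \<in> S1 \<or> e \<in> S2")
    case True
    with less.prems show ?thesis by blast
  next
    case False
    have fin: "finite (S1 \<union> S2)"
      using supp_circuit_subset[OF X] less.prems(1,2) coord_subspace_finite[OF X]
      by (meson finite_Un finite_subset)
    obtain g where "g \<in> S1" "g \<in> S2" using less.prems(3) by blast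
    with False obtain C C' where "supp_circuit X C" "supp_circuit X C'" "C \<inter> C' \<noteq> {}" "e \<in> C" "h \<in> C'"
        "C \<union> C' \<subset> S1 \<union> S2"
      using supp_circuits_meeting_shrink[OF X less.prems(1,2) _ _ less.prems(4) _ less.prems(5)] by metis
    with less.hyps[OF psubset_card_mono[OF fin]] show ?thesis by blast
  qed
qed

lemma circuit_linked_refl: "circuit_linked X e e"
  unfolding circuit_linked_def by blast

lemma circuit_linked_sym: "circuit_linked X e f \<Longrightarrow> circuit_linked X f e"
  unfolding circuit_linked_def by blast

lemma circuit_linked_trans:
  assumes "coord_subspace E X" "circuit_linked X e g" "circuit_linked X g h"
  shows "circuit_linked X e h"
proof (cases "e = g \<or> g = h")
  case True
  with assms(2,3) show ?thesis by blast
next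
  case False
  then obtain S1 S2 where "supp_circuit X S1" "supp_circuit X S2" "e \<in> S1" "g \<in> S1" "g \<in> S2" "h \<in> S2"
    using assms(2,3) unfolding circuit_linked_def by blast
  with supp_circuits_meeting_linked[OF assms(1), of S1 S2 e h] show ?thesis
    unfolding circuit_linked_def by blast
qed

lemma circuit_linked_circuit: "supp_circuit X S \<Longrightarrow> e \<in> S \<Longrightarrow> f \<in> S \<Longrightarrow> circuit_linked X e f"
  unfolding circuit_linked_def by blast

text \<open>Cancelling the coordinates of x in T one at a time against vectors supported in T
  leaves restr0 x T as x minus a vector of X.\<close>

lemma separator_by_cancellation:
  assumes X: "coord_subspace E X"
    and cancel: "\<And>x h. x \<in> X \<Longrightarrow> h \<in> T \<Longrightarrow> x h \<noteq> 0 \<Longrightarrow>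
      \<exists>w\<in>X. w h \<noteq> 0 \<and> (\<forall>i. w i \<noteq> 0 \<longrightarrow> i \<in> T \<and> x i \<noteq> 0)"
  shows "separator X T"
  unfolding separator_def
proof
  fix x assume "x \<in> X"
  then show "restr0 x T \<in> X"
  proof (induction "card {i \<in> T. x i \<noteq> 0}" arbitrary: x rule: less_induct)
    case less
    show ?case
    proof (cases "\<exists>h\<in>T. x h \<noteq> 0")
      case False
      then have "restr0 x T = (\<lambda>_. 0)" unfolding restr0_def by auto
      then show ?thesis using coord_subspace_zero[OF X] by simp
    next
      case True
      then obtain h where h: "h \<in> T" "x h \<noteq> 0" by blast
      then obtain w where w: "w \<in> X" "w h \<noteq> 0" "\<And>i. w i \<noteq> 0 \<Longrightarrow> i \<in> T \<and> x i \<noteq> 0"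
        using cancel[OF less.prems] by blast
      define x' where "x' = (\<lambda>i. x i - (x h / w h) * w i)"
      have x'X: "x' \<in> X" unfolding x'_def by (rule coord_subspace_diff_scaled[OF X less.prems w(1)])
      have "x' h = 0" "\<And>i. x' i \<noteq> 0 \<Longrightarrow> x i \<noteq> 0"
        using w unfolding x'_def by fastforce+
      with h have "{i \<in> T. x' i \<noteq> 0} \<subset> {i \<in> T. x i \<noteq> 0}" by blast
      moreover have "{i \<in> T. x i \<noteq> 0} \<subseteq> E"
        using coord_subspace_supp[OF X less.prems] unfolding supp_in_def by blast
      ultimately have "card {i \<in> T. x' i \<noteq> 0} < card {i \<in> T. x i \<noteq> 0}"
        using coord_subspace_finite[OF X] by (meson psubset_card_mono finite_subset)
      from less.hyps[OF this x'X] have "restr0 x' T \<in> X" .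
      moreover have "restr0 x T = (\<lambda>i. restr0 x' T i + (x h / w h) * w i)"
      proof
        fix i
        show "restr0 x T i = restr0 x' T i + (x h / w h) * w i"
          using w(3) unfolding restr0_def x'_def by auto
      qed
      ultimately show ?thesis using coord_subspace_add_scaled[OF X _ w(1)] by metis
    qed
  qed
qed

lemma separator_linked_class:
  assumes X: "coord_subspace E X"
  shows "separator X {g \<in> E. circuit_linked X e g}"
proof (rule separator_by_cancellation[OF X])
  fix x h assume x: "x \<in> X" and h: "h \<in> {g \<in> E. circuit_linked X e g}" "x h \<noteq> 0"
  obtain C where C: "supp_circuit X C" "h \<in> C" "C \<subseteq> {i. x i \<noteq> 0}"
    using supp_circuit_within[OF X x h(2)] by blast
  have CT: "C \<subseteq> {g \<in> E. circuit_linked X e g}"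
    using h(1) supp_circuit_subset[OF X C(1)]
      circuit_linked_trans[OF X _ circuit_linked_circuit[OF C(1,2)]] by blast
  with C obtain w where "w \<in> X" "\<forall>i. w i \<noteq> 0 \<longleftrightarrow> i \<in> C"
    using supp_circuit_vector[OF C(1)] by blast
  with C CT show "\<exists>w\<in>X. w h \<noteq> 0 \<and>
      (\<forall>i. w i \<noteq> 0 \<longrightarrow> i \<in> {g \<in> E. circuit_linked X e g} \<and> x i \<noteq> 0)"
    by blast
qed

text \<open>A circuit meets every separator through one of its elements in a dependent set, hence
  lies inside it.\<close>

lemma circuit_linked_iff_separators:
  assumes X: "coord_subspace E X" and "e \<in> E"
  shows "circuit_linked X e f \<longleftrightarrow> (\<forall>S. separator X S \<longrightarrow> e \<in> S \<longrightarrow> f \<in> S)"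
proof
  assume linked: "circuit_linked X e f"
  show "\<forall>S. separator X S \<longrightarrow> e \<in> S \<longrightarrow> f \<in> S"
  proof (intro allI impI)
    fix S assume S: "separator X S" "e \<in> S"
    show "f \<in> S"
    proof (cases "e = f")
      case False
      then obtain C where C: "supp_circuit X C" "e \<in> C" "f \<in> C"
        using linked unfolding circuit_linked_def by blast
      obtain w where w: "w \<in> X" "\<forall>i. w i \<noteq> 0 \<longleftrightarrow> i \<in> C"
        using supp_circuit_vector[OF C(1)] by blast
      have "restr0 w S \<in> X" using S(1) w(1) unfolding separator_def by blast
      moreover have "supp_in (restr0 w S) (C \<inter> S)" "restr0 w S e \<noteq> 0"
        using w C S unfolding restr0_def supp_in_def by auto
      ultimately have "supp_dep X (C \<inter> S)" using C(2) S(2) unfolding supp_dep_def by blast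
      then show ?thesis using C unfolding supp_circuit_def by blast
    qed (use S in simp)
  qed
next
  assume "\<forall>S. separator X S \<longrightarrow> e \<in> S \<longrightarrow> f \<in> S"
  with separator_linked_class[OF X, of e] \<open>e \<in> E\<close> show "circuit_linked X e f"
    using circuit_linked_refl by blast
qed

lemma supp_connected_iff_linked:
  assumes "coord_subspace E X"
  shows "supp_connected X E \<longleftrightarrow> (\<forall>e\<in>E. \<forall>f\<in>E. circuit_linked X e f)"
  using supp_circuit_subset[OF assms] unfolding supp_connected_def circuit_linked_def by blast

lemma supp_connected_linked_class:
  assumes X: "coord_subspace E X"
  shows "supp_connected X {f \<in> E. circuit_linked X e f}"
  unfolding supp_connected_def
proof (intro ballI impI)
  let ?C = "{f \<in> E. circuit_linked X e f}"
  fix f f' assume f: "f \<in> ?C" "f' \<in> ?C" "f \<noteq> f'"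
  then have "circuit_linked X f f'" using circuit_linked_sym circuit_linked_trans[OF X] by blast
  then obtain S where S: "supp_circuit X S" "f \<in> S" "f' \<in> S"
    using f(3) unfolding circuit_linked_def by blast
  have "S \<subseteq> ?C"
    using f(1) supp_circuit_subset[OF X S(1)]
      circuit_linked_trans[OF X _ circuit_linked_circuit[OF S(1,2)]] by blast
  with S show "\<exists>S. supp_circuit X S \<and> S \<subseteq> ?C \<and> f \<in> S \<and> f' \<in> S" by blast
qed

lemma supp_component_iff_linked_class:
  assumes X: "coord_subspace E X"
  shows "supp_component X E C \<longleftrightarrow> (\<exists>e\<in>E. C = {f \<in> E. circuit_linked X e f})"
proof
  assume C: "supp_component X E C"
  then obtain e where e: "e \<in> C" and CE: "C \<subseteq> E" unfolding supp_component_def by blast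
  have "C \<subseteq> {f \<in> E. circuit_linked X e f}"
    using C e CE circuit_linked_refl
    unfolding supp_component_def supp_connected_def circuit_linked_def by blast
  moreover have "\<not> C \<subset> {f \<in> E. circuit_linked X e f}"
    using C supp_connected_linked_class[OF X, of e] unfolding supp_component_def by blast
  ultimately show "\<exists>e\<in>E. C = {f \<in> E. circuit_linked X e f}" using e CE by blast
next
  assume "\<exists>e\<in>E. C = {f \<in> E. circuit_linked X e f}"
  then obtain e where e: "e \<in> E" and C: "C = {f \<in> E. circuit_linked X e f}" by blast
  have "e \<in> C" using e C circuit_linked_refl by fastforce
  moreover have "\<not> supp_connected X C'" if C': "C \<subset> C'" "C' \<subseteq> E" for C'
  proof
    assume "supp_connected X C'"
    moreover obtain f where "f \<in> C'" "f \<notin> C" using C' by blast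
    ultimately show False
      using \<open>e \<in> C\<close> C' C unfolding supp_connected_def circuit_linked_def by blast
  qed
  ultimately show "supp_component X E C"
    using C supp_connected_linked_class[OF X] unfolding supp_component_def by blast
qed

lemma supp_component_separator:
  "coord_subspace E X \<Longrightarrow> supp_component X E C \<Longrightarrow> separator X C"
  using supp_component_iff_linked_class separator_linked_class by metis

section \<open>Orthogonal complements\<close>

definition dot_on :: "nat set \<Rightarrow> (nat \<Rightarrow> 'a::field) \<Rightarrow> (nat \<Rightarrow> 'a) \<Rightarrow> 'a" where
  "dot_on E x y = (\<Sum>i\<in>E. x i * y i)"

definition orth_on :: "nat set \<Rightarrow> (nat \<Rightarrow> 'a::field) set \<Rightarrow> (nat \<Rightarrow> 'a) set" where
  "orth_on E X = {y. supp_in y E \<and> (\<forall>x\<in>X. dot_on E x y = 0)}"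

lemma dot_on_commute: "dot_on E x y = dot_on E y x"
  unfolding dot_on_def by (simp add: mult.commute)

lemma dot_on_add_scaled: "dot_on E (\<lambda>i. x i + c * z i) y = dot_on E x y + c * dot_on E z y"
  unfolding dot_on_def by (simp add: algebra_simps sum.distrib sum_distrib_left)

lemma dot_on_diff_scaled: "dot_on E (\<lambda>i. x i - c * z i) y = dot_on E x y - c * dot_on E z y"
  unfolding dot_on_def by (simp add: algebra_simps sum_subtractf sum_distrib_left)

lemma dot_on_insert: "finite E \<Longrightarrow> a \<notin> E \<Longrightarrow> dot_on (insert a E) x y = x a * y a + dot_on E x y"
  unfolding dot_on_def by simp

lemma dot_on_unit_fun: "finite E \<Longrightarrow> a \<in> E \<Longrightarrow> dot_on E (unit_fun a) y = y a"
proof -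
  have "dot_on E (unit_fun a) y = (\<Sum>i\<in>E. if i = a then y i else 0)"
    unfolding dot_on_def unit_fun_def by (rule sum.cong) auto
  also assume "finite E" "a \<in> E"
  then have "(\<Sum>i\<in>E. if i = a then y i else 0) = y a" by (simp add: sum.delta)
  finally show ?thesis .
qed

lemma unit_fun_orth_on:
  assumes "finite E" "a \<in> E" "\<forall>x\<in>X. x a = 0"
  shows "unit_fun a \<in> orth_on E X"
proof -
  have "dot_on E x (unit_fun a) = x a" if "x \<in> X" for x
    using dot_on_unit_fun[OF assms(1,2), of x] by (simp add: dot_on_commute)
  moreover have "supp_in (unit_fun a) E" using assms(2) unfolding supp_in_def unit_fun_def by simp
  ultimately show ?thesis using assms(3) unfolding orth_on_def by simp
qed

lemma coord_subspace_orth_on: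
  assumes "finite E" shows "coord_subspace E (orth_on E X)"
proof -
  have "(\<Sum>i\<in>E. x i * (y i + z i)) = (\<Sum>i\<in>E. x i * y i) + (\<Sum>i\<in>E. x i * z i)"
    for x y z :: "nat \<Rightarrow> 'a" by (simp add: distrib_left sum.distrib)
  moreover have "(\<Sum>i\<in>E. x i * (c * y i)) = c * (\<Sum>i\<in>E. x i * y i)"
    for x y :: "nat \<Rightarrow> 'a" and c by (simp add: sum_distrib_left algebra_simps)
  ultimately show ?thesis
    using assms unfolding coord_subspace_def orth_on_def dot_on_def supp_in_def by auto
qed

lemma separator_orth_on:
  assumes "separator X S" shows "separator (orth_on E X) S"
  unfolding separator_def
proof
  fix y assume y: "y \<in> orth_on E X"
  have "dot_on E x (restr0 y S) = 0" if "x \<in> X" for x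
  proof -
    have "dot_on E x (restr0 y S) = dot_on E (restr0 x S) y"
      unfolding dot_on_def restr0_def by (rule sum.cong) auto
    also have "\<dots> = 0" using assms that y unfolding separator_def orth_on_def by blast
    finally show ?thesis .
  qed
  with y show "restr0 y S \<in> orth_on E X" unfolding orth_on_def supp_in_def restr0_def by auto
qed

lemma coord_subspace_vanishing_at:
  assumes "coord_subspace (insert a E) X" "finite E"
  shows "coord_subspace E {w \<in> X. w a = 0}"
  using assms unfolding coord_subspace_def supp_in_def by auto

text \<open>One step of Gaussian elimination: p is a pivot for the coordinate a (or p = 0 if every
  vector of X vanishes at a), and a vector orthogonal to the vectors of X vanishing at a is
  corrected at a to become orthogonal to all of X.\<close>

lemma orth_on_insert_pivot:
  assumes X: "coord_subspace (insert a E) X" and a: "a \<notin> E"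
    and p: "p \<in> X" "\<forall>x\<in>X. x a * p a = x a"
    and y0: "y0 \<in> orth_on E {w \<in> X. w a = 0}"
  defines "y \<equiv> y0(a := - dot_on E p y0)"
  shows "y \<in> orth_on (insert a E) X"
    and "dot_on (insert a E) v y = dot_on E (\<lambda>i. v i - v a * p i) y0"
proof -
  have fin: "finite E" using coord_subspace_finite[OF X] by simp
  have "dot_on E x y = dot_on E x y0" for x
    unfolding dot_on_def y_def using a by (intro sum.cong) auto
  then have dot: "dot_on (insert a E) x y = dot_on E (\<lambda>i. x i - x a * p i) y0" for x
    unfolding dot_on_insert[OF fin a] dot_on_diff_scaled y_def by simp
  then show "dot_on (insert a E) v y = dot_on E (\<lambda>i. v i - v a * p i) y0" .
  have "(\<lambda>i. x i - x a * p i) \<in> {w \<in> X. w a = 0}" if "x \<in> X" for x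
    using coord_subspace_diff_scaled[OF X that p(1)] bspec[OF p(2) that] by simp
  then have "\<forall>x\<in>X. dot_on (insert a E) x y = 0" using y0 unfolding dot orth_on_def by blast
  moreover have "supp_in y (insert a E)" using y0 unfolding y_def orth_on_def supp_in_def by auto
  ultimately show "y \<in> orth_on (insert a E) X" unfolding orth_on_def by blast
qed

lemma orth_on_separates:
  assumes "coord_subspace E X" "supp_in v E" "v \<notin> X"
  shows "\<exists>y\<in>orth_on E X. dot_on E v y \<noteq> 0"
proof -
  have "finite E" using assms(1) by (rule coord_subspace_finite)
  then show ?thesis using assms
  proof (induction E arbitrary: X v rule: finite_induct)
    case empty
    then have "v = (\<lambda>_. 0)" unfolding supp_in_def by auto
    with empty show ?case using coord_subspace_zero by blast
  next
    case (insert a E)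
    note X = insert.prems(1)
    consider (coloop) "v a \<noteq> 0" "\<forall>x\<in>X. x a = 0"
      | (pivot) p where "p \<in> X" "\<forall>x\<in>X. x a * p a = x a" "v a * p a = v a"
    proof (cases "\<exists>w\<in>X. w a \<noteq> 0")
      case True
      then obtain w where "w \<in> X" "w a \<noteq> 0" by blast
      with coord_subspace_scale[OF X this(1), of "1 / w a"] that(2) show thesis by simp
    next
      case False
      then show thesis using that coord_subspace_zero[OF X] by (cases "v a = 0") auto
    qed
    then show ?case
    proof cases
      case coloop
      have "unit_fun a \<in> orth_on (insert a E) X"
        using unit_fun_orth_on[of "insert a E"] insert.hyps(1) coloop(2) by blast
      moreover have "dot_on (insert a E) v (unit_fun a) = v a"
        using dot_on_unit_fun[of "insert a E" a v] insert.hyps(1) by (simp add: dot_on_commute)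
      ultimately show ?thesis using coloop(1) by metis
    next
      case pivot
      define v' where "v' = (\<lambda>i. v i - v a * p i)"
      have "v' i = 0" if "i \<notin> E" for i
      proof (cases "i = a")
        case False
        with that insert.prems(2) coord_subspace_supp[OF X pivot(1)] show ?thesis
          unfolding v'_def supp_in_def by simp
      qed (use pivot(3) v'_def in simp)
      then have "supp_in v' E" unfolding supp_in_def by blast
      moreover have "v' \<notin> {w \<in> X. w a = 0}"
      proof
        assume "v' \<in> {w \<in> X. w a = 0}"
        then have "(\<lambda>i. v' i + v a * p i) \<in> X"
          using coord_subspace_add_scaled[OF X _ pivot(1)] by blast
        with insert.prems(3) show False unfolding v'_def by simp
      qed
      ultimately obtain y0 where y0: "y0 \<in> orth_on E {w \<in> X. w a = 0}" "dot_on E v' y0 \<noteq> 0"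
        using insert.IH coord_subspace_vanishing_at[OF X insert.hyps(1)] by blast
      note y = orth_on_insert_pivot[OF X insert.hyps(2) pivot(1,2) y0(1)]
      from y(2)[of v] y0(2) have "dot_on (insert a E) v (y0(a := - dot_on E p y0)) \<noteq> 0"
        unfolding v'_def by simp
      with y(1) show ?thesis by blast
    qed
  qed
qed

lemma orth_on_orth_on:
  assumes X: "coord_subspace E X" shows "orth_on E (orth_on E X) = X"
proof
  show "X \<subseteq> orth_on E (orth_on E X)"
    using coord_subspace_supp[OF X] unfolding orth_on_def by (auto simp: dot_on_commute)
  show "orth_on E (orth_on E X) \<subseteq> X"
  proof
    fix v assume v: "v \<in> orth_on E (orth_on E X)"
    show "v \<in> X"
    proof (rule ccontr)
      assume "v \<notin> X"
      with v obtain y where "y \<in> orth_on E X" "dot_on E v y \<noteq> 0"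
        using orth_on_separates[OF X] unfolding orth_on_def by blast
      with v show False unfolding orth_on_def by (auto simp: dot_on_commute)
    qed
  qed
qed

lemma separator_orth_on_iff:
  "coord_subspace E X \<Longrightarrow> separator (orth_on E X) S \<longleftrightarrow> separator X S"
  using separator_orth_on[of X S E] separator_orth_on[of "orth_on E X" S E] orth_on_orth_on
  by metis

lemma circuit_linked_orth_on_iff:
  assumes X: "coord_subspace E X" and "e \<in> E"
  shows "circuit_linked (orth_on E X) e f \<longleftrightarrow> circuit_linked X e f"
  unfolding circuit_linked_iff_separators[OF X \<open>e \<in> E\<close>]
    circuit_linked_iff_separators[OF coord_subspace_orth_on[OF coord_subspace_finite[OF X]] \<open>e \<in> E\<close>]
    separator_orth_on_iff[OF X] ..

lemma supp_connected_orth_on_iff: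
  assumes X: "coord_subspace E X"
  shows "supp_connected (orth_on E X) E \<longleftrightarrow> supp_connected X E"
  using supp_connected_iff_linked[OF X] circuit_linked_orth_on_iff[OF X]
    supp_connected_iff_linked[OF coord_subspace_orth_on[OF coord_subspace_finite[OF X]]]
  by metis

lemma supp_component_orth_on_iff:
  assumes X: "coord_subspace E X"
  shows "supp_component (orth_on E X) E C \<longleftrightarrow> supp_component X E C"
proof -
  have "{f \<in> E. circuit_linked (orth_on E X) e f} = {f \<in> E. circuit_linked X e f}" if "e \<in> E" for e
    using circuit_linked_orth_on_iff[OF X that] by blast
  then have "(\<exists>e\<in>E. C = {f \<in> E. circuit_linked (orth_on E X) e f}) \<longleftrightarrow>
      (\<exists>e\<in>E. C = {f \<in> E. circuit_linked X e f})" by auto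
  then show ?thesis
    unfolding supp_component_iff_linked_class[OF X]
      supp_component_iff_linked_class[OF coord_subspace_orth_on[OF coord_subspace_finite[OF X]]] .
qed

definition span_insert :: "(nat \<Rightarrow> 'a::field) set \<Rightarrow> (nat \<Rightarrow> 'a) \<Rightarrow> (nat \<Rightarrow> 'a) set" where
  "span_insert X u = {(\<lambda>i. x i + c * u i) | x c. x \<in> X}"

lemma orth_on_span_insert:
  assumes "coord_subspace E X"
  shows "orth_on E (span_insert X u) = {y \<in> orth_on E X. dot_on E u y = 0}"
proof -
  have "x \<in> span_insert X u" if "x \<in> X" for x
    using that unfolding span_insert_def by (intro CollectI exI[of _ x] exI[of _ 0]) simp
  moreover have "u \<in> span_insert X u"
    using coord_subspace_zero[OF assms] unfolding span_insert_def
    by (intro CollectI exI[of _ "\<lambda>_. 0"] exI[of _ 1]) simp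
  ultimately show ?thesis
    unfolding orth_on_def span_insert_def by (auto simp: dot_on_add_scaled)
qed

lemma orth_on_restrict_separator:
  assumes X: "coord_subspace E X" and C: "separator X C" "C \<subseteq> E"
  shows "orth_on C {x \<in> X. supp_in x C} = {y \<in> orth_on E X. supp_in y C}"
proof -
  have fin: "finite E" by (rule coord_subspace_finite[OF X])
  have dot: "dot_on E x y = dot_on C x y" if "supp_in y C" for x y :: "nat \<Rightarrow> 'a"
    unfolding dot_on_def using fin C(2) that unfolding supp_in_def
    by (intro sum.mono_neutral_right) auto
  have restr: "dot_on C x y = dot_on C (restr0 x C) y" for x y :: "nat \<Rightarrow> 'a"
    unfolding dot_on_def restr0_def by (rule sum.cong) auto
  have restr_in: "restr0 x C \<in> {x \<in> X. supp_in x C}" if "x \<in> X" for x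
    using C(1) that unfolding separator_def restr0_def supp_in_def by auto
  show ?thesis
  proof (intro equalityI subsetI)
    fix y assume y: "y \<in> orth_on C {x \<in> X. supp_in x C}"
    then have yC: "supp_in y C" unfolding orth_on_def by blast
    have "dot_on E x y = 0" if "x \<in> X" for x
      using y restr_in[OF that] unfolding dot[OF yC] restr[of x] orth_on_def by blast
    moreover have "supp_in y E" using yC C(2) unfolding supp_in_def by blast
    ultimately show "y \<in> {y \<in> orth_on E X. supp_in y C}" using yC unfolding orth_on_def by blast
  next
    fix y assume y: "y \<in> {y \<in> orth_on E X. supp_in y C}"
    then have "dot_on C x y = 0" if "x \<in> X" for x
      using that dot[of y x] unfolding orth_on_def by auto
    with y show "y \<in> orth_on C {x \<in> X. supp_in x C}" unfolding orth_on_def by blast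
  qed
qed

lemma supp_dep_singleton_iff:
  assumes "coord_subspace E X" shows "supp_dep X {a} \<longleftrightarrow> unit_fun a \<in> X"
proof
  assume "supp_dep X {a}"
  then obtain x where x: "x \<in> X" "supp_in x {a}" "x a \<noteq> 0" unfolding supp_dep_def by blast
  then have "(\<lambda>i. (1 / x a) * x i) = unit_fun a" unfolding unit_fun_def supp_in_def by auto
  with coord_subspace_scale[OF assms x(1)] show "unit_fun a \<in> X" by metis
next
  assume "unit_fun a \<in> X"
  moreover have "supp_in (unit_fun a) {a}" "unit_fun a a \<noteq> (0::'a)"
    unfolding supp_in_def unit_fun_def by simp_all
  ultimately show "supp_dep X {a}" unfolding supp_dep_def by blast
qed

lemma all_loops_iff_orth_on_indep:
  assumes X: "coord_subspace E X"
  shows "(\<forall>a\<in>E. supp_dep X {a}) \<longleftrightarrow> \<not> supp_dep (orth_on E X) E"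
proof -
  have fin: "finite E" by (rule coord_subspace_finite[OF X])
  have "supp_dep (orth_on E X) E \<longleftrightarrow> (\<exists>y\<in>orth_on E X. \<exists>a\<in>E. y a \<noteq> 0)"
    unfolding supp_dep_def orth_on_def by blast
  also have "\<dots> \<longleftrightarrow> (\<exists>y\<in>orth_on E X. \<exists>a\<in>E. dot_on E (unit_fun a) y \<noteq> 0)"
    by (simp add: dot_on_unit_fun[OF fin] cong: bex_cong)
  also have "\<dots> \<longleftrightarrow> (\<exists>a\<in>E. unit_fun a \<notin> X)"
  proof
    assume "\<exists>y\<in>orth_on E X. \<exists>a\<in>E. dot_on E (unit_fun a) y \<noteq> 0"
    then show "\<exists>a\<in>E. unit_fun a \<notin> X" unfolding orth_on_def by blast
  next
    assume "\<exists>a\<in>E. unit_fun a \<notin> X"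
    moreover have "supp_in (unit_fun a) E" if "a \<in> E" for a
      using that unfolding supp_in_def unit_fun_def by simp
    ultimately show "\<exists>y\<in>orth_on E X. \<exists>a\<in>E. dot_on E (unit_fun a) y \<noteq> 0"
      using orth_on_separates[OF X] by blast
  qed
  finally show ?thesis using supp_dep_singleton_iff[OF X] by blast
qed

section \<open>Column matroids as coordinate subspaces\<close>

definition vec_subspace :: "nat \<Rightarrow> 'a::field vec set \<Rightarrow> bool" where
  "vec_subspace m K \<longleftrightarrow> K \<subseteq> carrier_vec m \<and> 0\<^sub>v m \<in> K \<and> (\<forall>a\<in>K. \<forall>b\<in>K. a + b \<in> K) \<and>
     (\<forall>c. \<forall>a\<in>K. c \<cdot>\<^sub>v a \<in> K)"

definition coef_space :: "'a::field mat \<Rightarrow> 'a vec set \<Rightarrow> nat set \<Rightarrow> (nat \<Rightarrow> 'a) set" where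
  "coef_space M K E = {x. supp_in x E \<and> lincomb_cols M x E \<in> K}"

lemma lincomb_cols_carrier[simp]: "lincomb_cols M x S \<in> carrier_vec (dim_row M)"
  unfolding lincomb_cols_def by simp

lemma lincomb_cols_cong:
  "(\<And>i. i \<in> S \<Longrightarrow> x i = y i) \<Longrightarrow> lincomb_cols M x S = lincomb_cols M y S"
  unfolding lincomb_cols_def by (intro eq_vecI) auto

lemma lincomb_cols_mono_neutral:
  assumes "finite E" "S \<subseteq> E" "supp_in x S"
  shows "lincomb_cols M x E = lincomb_cols M x S"
  unfolding lincomb_cols_def using assms unfolding supp_in_def
  by (intro eq_vecI) (auto intro!: sum.mono_neutral_right)

lemma lincomb_cols_add_scaled:
  "lincomb_cols M (\<lambda>i. x i + c * y i) E = lincomb_cols M x E + c \<cdot>\<^sub>v lincomb_cols M y E"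
  unfolding lincomb_cols_def
  by (intro eq_vecI) (auto simp: algebra_simps sum.distrib sum_distrib_left)

lemma lincomb_cols_scale: "lincomb_cols M (\<lambda>i. c * y i) E = c \<cdot>\<^sub>v lincomb_cols M y E"
  unfolding lincomb_cols_def by (intro eq_vecI) (auto simp: algebra_simps sum_distrib_left)

lemma lincomb_cols_zero: "lincomb_cols M (\<lambda>_. 0) E = 0\<^sub>v (dim_row M)"
  unfolding lincomb_cols_def by (intro eq_vecI) auto

lemma coord_subspace_coef_space:
  assumes K: "vec_subspace (dim_row M) K" and "finite E"
  shows "coord_subspace E (coef_space M K E)"
proof -
  have "lincomb_cols M (\<lambda>i. x i + y i) E = lincomb_cols M x E + lincomb_cols M y E" for x y
    using lincomb_cols_add_scaled[of M x 1 y E] by simp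
  then show ?thesis
    using assms unfolding coord_subspace_def coef_space_def vec_subspace_def supp_in_def
    by (auto simp: lincomb_cols_zero lincomb_cols_scale)
qed

lemma coef_space_subset:
  assumes "finite E" "C \<subseteq> E"
  shows "coef_space M K C = {x \<in> coef_space M K E. supp_in x C}"
  using assms lincomb_cols_mono_neutral[OF assms] unfolding coef_space_def supp_in_def by auto

lemma mdep_iff_supp_dep:
  assumes "finite E" "S \<subseteq> E"
  shows "mdep M K S \<longleftrightarrow> supp_dep (coef_space M K E) S"
proof
  assume "mdep M K S"
  then obtain \<alpha> i where \<alpha>: "i \<in> S" "\<alpha> i \<noteq> 0" "lincomb_cols M \<alpha> S \<in> K" unfolding mdep_def by blast
  have supp: "supp_in (restr0 \<alpha> S) S" unfolding restr0_def supp_in_def by simp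
  have "lincomb_cols M (restr0 \<alpha> S) E = lincomb_cols M (restr0 \<alpha> S) S"
    by (rule lincomb_cols_mono_neutral[OF assms supp])
  also have "\<dots> = lincomb_cols M \<alpha> S" unfolding restr0_def by (rule lincomb_cols_cong) simp
  finally have "lincomb_cols M (restr0 \<alpha> S) E = lincomb_cols M \<alpha> S" .
  moreover have "supp_in (restr0 \<alpha> S) E" using supp assms(2) unfolding supp_in_def by blast
  moreover have "restr0 \<alpha> S i \<noteq> 0" using \<alpha>(1,2) unfolding restr0_def by simp
  ultimately show "supp_dep (coef_space M K E) S"
    using supp \<alpha>(1,3) unfolding supp_dep_def coef_space_def by auto
next
  assume "supp_dep (coef_space M K E) S"
  then obtain x i where x: "x \<in> coef_space M K E" "supp_in x S" "i \<in> S" "x i \<noteq> 0"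
    unfolding supp_dep_def by blast
  with lincomb_cols_mono_neutral[OF assms x(2)] show "mdep M K S"
    unfolding mdep_def coef_space_def by auto
qed

lemma Max_card_indep_eq_0_iff:
  assumes "finite E" "\<not> D {}" and mono: "\<And>T S. T \<subseteq> S \<Longrightarrow> S \<subseteq> E \<Longrightarrow> D T \<Longrightarrow> D S"
  shows "Max {card S | S. S \<subseteq> E \<and> \<not> D S} = 0 \<longleftrightarrow> (\<forall>a\<in>E. D {a})"
proof -
  let ?M = "{card S | S. S \<subseteq> E \<and> \<not> D S}"
  have fin: "finite ?M" and "0 \<in> ?M" using assms(1,2) by force+
  then have "Max ?M = 0 \<longleftrightarrow> (\<forall>k\<in>?M. k = 0)"
    using Max_eq_iff[OF fin, of 0] by auto
  also have "\<dots> \<longleftrightarrow> (\<forall>S. S \<subseteq> E \<longrightarrow> \<not> D S \<longrightarrow> S = {})"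
  proof
    assume M0: "\<forall>k\<in>?M. k = 0"
    show "\<forall>S. S \<subseteq> E \<longrightarrow> \<not> D S \<longrightarrow> S = {}"
    proof (intro allI impI)
      fix S assume "S \<subseteq> E" "\<not> D S"
      with M0 have "card S = 0" by blast
      with finite_subset[OF \<open>S \<subseteq> E\<close> assms(1)] show "S = {}" by simp
    qed
  qed auto
  also have "\<dots> \<longleftrightarrow> (\<forall>a\<in>E. D {a})"
  proof
    assume "\<forall>a\<in>E. D {a}"
    then show "\<forall>S. S \<subseteq> E \<longrightarrow> \<not> D S \<longrightarrow> S = {}" using mono by blast
  qed blast
  finally show ?thesis .
qed

lemma Max_card_indep_eq_card_iff:
  assumes "finite E" "\<not> D {}"
  shows "Max {card S | S. S \<subseteq> E \<and> \<not> D S} = card E \<longleftrightarrow> \<not> D E"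
proof
  let ?M = "{card S | S. S \<subseteq> E \<and> \<not> D S}"
  have fin: "finite ?M" and "?M \<noteq> {}" using assms by force+
  show "\<not> D E" if "Max ?M = card E"
  proof -
    from Max_in[OF fin \<open>?M \<noteq> {}\<close>] that obtain S where "card S = card E" "S \<subseteq> E" "\<not> D S"
      by auto
    with card_subset_eq[OF assms(1)] show ?thesis by blast
  qed
  show "Max ?M = card E" if "\<not> D E"
    using that assms(1) card_mono by (intro Max_eqI[OF fin]) auto
qed

lemma mdep_empty: "\<not> mdep M K {}"
  unfolding mdep_def by simp

lemma mdep_mono: "finite E \<Longrightarrow> T \<subseteq> S \<Longrightarrow> S \<subseteq> E \<Longrightarrow> mdep M K T \<Longrightarrow> mdep M K S"
  using mdep_iff_supp_dep supp_dep_mono by (metis subset_trans)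

lemma mrank_eq_0_iff:
  assumes "finite E"
  shows "mrank M K E = 0 \<longleftrightarrow> (\<forall>a\<in>E. supp_dep (coef_space M K E) {a})"
proof -
  have "mrank M K E = 0 \<longleftrightarrow> (\<forall>a\<in>E. mdep M K {a})"
    unfolding mrank_def mindep_def
    by (rule Max_card_indep_eq_0_iff[of E "mdep M K", OF assms mdep_empty mdep_mono[OF assms]])
  then show ?thesis by (auto simp: mdep_iff_supp_dep[OF assms])
qed

lemma mrank_eq_card_iff:
  assumes "finite E"
  shows "mrank M K E = card E \<longleftrightarrow> \<not> supp_dep (coef_space M K E) E"
  unfolding mrank_def mindep_def Max_card_indep_eq_card_iff[of E "mdep M K", OF assms mdep_empty]
  using mdep_iff_supp_dep[OF assms] by blast

lemma mcircuit_iff_supp_circuit: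
  assumes "finite E" "S \<subseteq> E"
  shows "mcircuit M K S \<longleftrightarrow> supp_circuit (coef_space M K E) S"
  using mdep_iff_supp_dep[OF assms(1)] assms(2)
  unfolding mcircuit_def supp_circuit_def mindep_def by (meson psubset_imp_subset subset_trans)

lemma mconnected_iff_supp_connected:
  assumes "finite E" "C \<subseteq> E"
  shows "mconnected M K C \<longleftrightarrow> supp_connected (coef_space M K E) C"
  using mcircuit_iff_supp_circuit[OF assms(1)] assms(2)
  unfolding mconnected_def supp_connected_def by (meson subset_trans)

lemma mcomponent_iff_supp_component:
  "finite E \<Longrightarrow> mcomponent M K E C \<longleftrightarrow> supp_component (coef_space M K E) E C"
  using mconnected_iff_supp_connected[of E] unfolding mcomponent_def supp_component_def by meson

lemma vec_subspace_zero: "vec_subspace m {0\<^sub>v m :: 'a::field vec}"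
  unfolding vec_subspace_def by auto

lemma vec_subspace_carrier: "vec_subspace m K \<Longrightarrow> k \<in> K \<Longrightarrow> k \<in> carrier_vec m"
  unfolding vec_subspace_def by blast

lemma vec_subspace_add_span:
  assumes K: "vec_subspace m K" and v: "v \<in> carrier_vec m"
  shows "vec_subspace m (add_span K v)"
proof -
  note Kc = vec_subspace_carrier[OF K]
  have "add_span K v \<subseteq> carrier_vec m" unfolding add_span_def using Kc v by auto
  moreover have "0\<^sub>v m = 0\<^sub>v m + 0 \<cdot>\<^sub>v v" using v by auto
  then have "0\<^sub>v m \<in> add_span K v" using K unfolding add_span_def vec_subspace_def by blast
  moreover have "a + b \<in> add_span K v" if ab: "a \<in> add_span K v" "b \<in> add_span K v" for a b
  proof -
    obtain k1 c1 k2 c2 where k: "a = k1 + c1 \<cdot>\<^sub>v v" "k1 \<in> K" "b = k2 + c2 \<cdot>\<^sub>v v" "k2 \<in> K"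
      using ab unfolding add_span_def by blast
    have "a + b = (k1 + k2) + (c1 + c2) \<cdot>\<^sub>v v"
      using k Kc[OF k(2)] Kc[OF k(4)] v by (intro eq_vecI) (auto simp: algebra_simps)
    moreover have "k1 + k2 \<in> K" using K k unfolding vec_subspace_def by blast
    ultimately show ?thesis unfolding add_span_def by blast
  qed
  moreover have "c \<cdot>\<^sub>v a \<in> add_span K v" if a: "a \<in> add_span K v" for a c
  proof -
    obtain k1 c1 where k: "a = k1 + c1 \<cdot>\<^sub>v v" "k1 \<in> K" using a unfolding add_span_def by blast
    have "c \<cdot>\<^sub>v a = c \<cdot>\<^sub>v k1 + (c * c1) \<cdot>\<^sub>v v"
      using k Kc[OF k(2)] v by (intro eq_vecI) (auto simp: algebra_simps)
    moreover have "c \<cdot>\<^sub>v k1 \<in> K" using K k unfolding vec_subspace_def by blast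
    ultimately show ?thesis unfolding add_span_def by blast
  qed
  ultimately show ?thesis unfolding vec_subspace_def by blast
qed

lemma coef_space_add_span:
  assumes K: "vec_subspace (dim_row A) K" and v: "v \<in> carrier_vec (dim_row A)"
    and x0: "supp_in x0 E" "lincomb_cols A x0 E = k0 + c0 \<cdot>\<^sub>v v" "k0 \<in> K" "c0 \<noteq> 0"
  shows "coef_space A (add_span K v) E = span_insert (coef_space A K E) x0"
proof (intro equalityI subsetI)
  note Kc = vec_subspace_carrier[OF K]
  fix x assume "x \<in> coef_space A (add_span K v) E"
  then obtain k c where x: "supp_in x E" "lincomb_cols A x E = k + c \<cdot>\<^sub>v v" "k \<in> K"
    unfolding coef_space_def add_span_def by blast
  define x' where "x' = (\<lambda>i. x i + (- (c / c0)) * x0 i)"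
  have "lincomb_cols A x' E = lincomb_cols A x E + (- (c / c0)) \<cdot>\<^sub>v lincomb_cols A x0 E"
    unfolding x'_def lincomb_cols_add_scaled ..
  also have "\<dots> = k + (- (c / c0)) \<cdot>\<^sub>v k0"
    using x(2,3) x0 Kc[OF x(3)] Kc[OF x0(3)] v by (intro eq_vecI) (auto simp: algebra_simps)
  finally have "x' \<in> coef_space A K E"
    using K x(1,3) x0(1,3) unfolding coef_space_def x'_def vec_subspace_def supp_in_def by simp
  moreover have "x = (\<lambda>i. x' i + (c / c0) * x0 i)" unfolding x'_def by auto
  ultimately show "x \<in> span_insert (coef_space A K E) x0" unfolding span_insert_def by blast
next
  note Kc = vec_subspace_carrier[OF K]
  fix x assume "x \<in> span_insert (coef_space A K E) x0"
  then obtain x' c where x: "x = (\<lambda>i. x' i + c * x0 i)" "x' \<in> coef_space A K E"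
    unfolding span_insert_def by blast
  have "lincomb_cols A x E = lincomb_cols A x' E + c \<cdot>\<^sub>v lincomb_cols A x0 E"
    unfolding x lincomb_cols_add_scaled ..
  also have "\<dots> = (lincomb_cols A x' E + c \<cdot>\<^sub>v k0) + (c * c0) \<cdot>\<^sub>v v"
    using x0 Kc[OF x0(3)] v by (intro eq_vecI) (auto simp: algebra_simps)
  finally have "lincomb_cols A x E \<in> add_span K v"
    using K x(2) x0(3) unfolding add_span_def vec_subspace_def coef_space_def by blast
  moreover have "supp_in x E" using x x0(1) unfolding coef_space_def supp_in_def by auto
  ultimately show "x \<in> coef_space A (add_span K v) E" unfolding coef_space_def by blast
qed

lemma coef_space_add_span_lincomb:
  assumes K: "vec_subspace (dim_row A) K"
  shows "coef_space A (add_span K (lincomb_cols A u E)) E =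
    span_insert (coef_space A K E) (restr0 u E)"
proof (rule coef_space_add_span[OF K lincomb_cols_carrier])
  show "supp_in (restr0 u E) E" unfolding supp_in_def restr0_def by simp
  show "0\<^sub>v (dim_row A) \<in> K" using K unfolding vec_subspace_def by blast
  have "lincomb_cols A (restr0 u E) E = lincomb_cols A u E"
    unfolding restr0_def by (rule lincomb_cols_cong) simp
  then show "lincomb_cols A (restr0 u E) E = 0\<^sub>v (dim_row A) + 1 \<cdot>\<^sub>v lincomb_cols A u E"
    by simp
qed simp

lemma coef_space_add_span_obtain:
  assumes K: "vec_subspace (dim_row A) K" and v: "v \<in> carrier_vec (dim_row A)"
  obtains u where "coef_space A (add_span K v) E = span_insert (coef_space A K E) u"
proof (cases "coef_space A (add_span K v) E \<subseteq> coef_space A K E")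
  case True
  have "k = k + 0 \<cdot>\<^sub>v v" if "k \<in> K" for k
    using vec_subspace_carrier[OF K that] v by (intro eq_vecI) auto
  then have "K \<subseteq> add_span K v" unfolding add_span_def by blast
  then have "coef_space A (add_span K v) E = coef_space A K E"
    using True unfolding coef_space_def by blast
  moreover have "span_insert (coef_space A K E) (\<lambda>_. 0) = coef_space A K E"
    unfolding span_insert_def by auto
  ultimately show thesis using that by metis
next
  case False
  then obtain x0 where x0: "x0 \<in> coef_space A (add_span K v) E" "x0 \<notin> coef_space A K E" by blast
  then obtain k0 c0 where k0: "supp_in x0 E" "lincomb_cols A x0 E = k0 + c0 \<cdot>\<^sub>v v" "k0 \<in> K"
    unfolding coef_space_def add_span_def by blast
  have "c0 \<noteq> 0"
  proof
    assume "c0 = 0"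
    then have "lincomb_cols A x0 E = k0" using k0 vec_subspace_carrier[OF K k0(3)] v
      by (intro eq_vecI) auto
    with x0(2) k0(1,3) show False unfolding coef_space_def by simp
  qed
  with coef_space_add_span[OF K v k0] that show thesis by blast
qed

lemma coef_space_append_row:
  assumes u: "u \<in> carrier_vec (dim_col B)" and E: "E \<subseteq> {0..<dim_col B}"
  defines "B' \<equiv> B @\<^sub>r mat_of_rows (dim_col B) [u]"
  shows "coef_space B' {0\<^sub>v (dim_row B')} E =
    {y \<in> coef_space B {0\<^sub>v (dim_row B)} E. (\<Sum>i\<in>E. y i * u $ i) = 0}"
proof -
  have dr: "dim_row B' = Suc (dim_row B)" unfolding B'_def append_rows_def by simp
  have row: "(\<Sum>i\<in>E. y i * B' $$ (r, i)) =
      (if r < dim_row B then \<Sum>i\<in>E. y i * B $$ (r, i) else \<Sum>i\<in>E. y i * u $ i)"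
    if "r < Suc (dim_row B)" for r y
    using that E u unfolding B'_def append_rows_def mat_of_rows_def
    by (auto intro!: sum.cong simp: less_Suc_eq)
  have "lincomb_cols B' y E = 0\<^sub>v (dim_row B') \<longleftrightarrow>
      lincomb_cols B y E = 0\<^sub>v (dim_row B) \<and> (\<Sum>i\<in>E. y i * u $ i) = 0" for y
    unfolding lincomb_cols_def dr by (auto simp: vec_eq_iff row less_Suc_eq)
  then show ?thesis unfolding coef_space_def by auto
qed

lemma row_space_carrier: "row_space M \<subseteq> carrier_vec (dim_col M)"
  unfolding row_space_def by auto

lemma row_in_row_space:
  assumes "r < dim_row M" shows "row M r \<in> row_space M"
proof -
  have "(\<Sum>i<dim_row M. (if i = r then 1 else 0) * M $$ (i, j)) =
      (\<Sum>i<dim_row M. if i = r then M $$ (i, j) else 0)" for j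
    by (rule sum.cong) auto
  then have "(\<Sum>i<dim_row M. (if i = r then 1 else 0) * M $$ (i, j)) = M $$ (r, j)" for j
    using assms by simp
  then show ?thesis unfolding row_space_def row_def
    by (intro CollectI exI[of _ "\<lambda>i. if i = r then 1 else 0"]) simp
qed

lemma coef_space_zero_eq_orth_compl:
  assumes "dim_col M = n"
  shows "coef_space M {0\<^sub>v (dim_row M)} {0..<n} =
    {x. supp_in x {0..<n} \<and> vec n x \<in> orth_compl n (row_space M)}"
proof -
  have "lincomb_cols M x {0..<n} = 0\<^sub>v (dim_row M) \<longleftrightarrow> (\<forall>w\<in>row_space M. vec n x \<bullet> w = 0)" for x
  proof -
    have row: "vec n x \<bullet> row M r = (\<Sum>j\<in>{0..<n}. x j * M $$ (r, j))" if "r < dim_row M" for r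
      using assms that unfolding scalar_prod_def row_def by (intro sum.cong) auto
    have comb: "vec n x \<bullet> vec n (\<lambda>j. \<Sum>i<dim_row M. c i * M $$ (i, j)) =
        (\<Sum>i<dim_row M. c i * (\<Sum>j\<in>{0..<n}. x j * M $$ (i, j)))" for c
      unfolding scalar_prod_def
      by (simp add: sum_distrib_left algebra_simps sum.swap[of _ "{0..<n}"])
    show ?thesis
    proof
      assume x0: "lincomb_cols M x {0..<n} = 0\<^sub>v (dim_row M)"
      have "(\<Sum>j\<in>{0..<n}. x j * M $$ (i, j)) = 0" if "i < dim_row M" for i
        using arg_cong[OF x0, of "\<lambda>w. w $ i"] that unfolding lincomb_cols_def by simp
      then show "\<forall>w\<in>row_space M. vec n x \<bullet> w = 0"
        unfolding row_space_def assms by (auto simp: comb)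
    next
      assume "\<forall>w\<in>row_space M. vec n x \<bullet> w = 0"
      then show "lincomb_cols M x {0..<n} = 0\<^sub>v (dim_row M)"
        using row_in_row_space[of _ M] row unfolding lincomb_cols_def by (intro eq_vecI) auto
    qed
  qed
  then show ?thesis unfolding coef_space_def orth_compl_def by auto
qed

lemma orth_on_vec_preimage:
  assumes "W \<subseteq> carrier_vec n"
  shows "orth_on {0..<n} {x. supp_in x {0..<n} \<and> vec n x \<in> W} =
    {y. supp_in y {0..<n} \<and> vec n y \<in> orth_compl n W}"
proof -
  have dot: "dot_on {0..<n} x y = vec n y \<bullet> vec n x" for x y :: "nat \<Rightarrow> 'a"
    unfolding dot_on_def scalar_prod_def by (auto simp: mult.commute intro: sum.cong)
  have "vec n (\<lambda>i. if i < n then w $ i else 0) = w" if "w \<in> W" for w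
    using assms that by (intro eq_vecI) auto
  then have "\<exists>x. supp_in x {0..<n} \<and> vec n x = w" if "w \<in> W" for w
    using that unfolding supp_in_def by (intro exI[of _ "\<lambda>i. if i < n then w $ i else 0"]) auto
  then show ?thesis unfolding orth_on_def orth_compl_def dot by auto
qed

section \<open>Contraction* and deletion* depth\<close>

text \<open>B represents the dual of the restriction of M(A,K) to E.\<close>

definition dual_rep :: "'a::field mat \<Rightarrow> 'a mat \<Rightarrow> 'a vec set \<Rightarrow> nat set \<Rightarrow> bool" where
  "dual_rep A B K E \<longleftrightarrow> vec_subspace (dim_row A) K \<and> E \<subseteq> {0..<dim_col A} \<and>
     dim_col B = dim_col A \<and> coef_space B {0\<^sub>v (dim_row B)} E = orth_on E (coef_space A K E)"

lemma dual_rep_coord_subspace: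
  assumes "dual_rep A B K E"
  shows "finite E" and "coord_subspace E (coef_space A K E)"
proof -
  show fin: "finite E" using assms unfolding dual_rep_def by (meson finite_atLeastLessThan finite_subset)
  show "coord_subspace E (coef_space A K E)"
    using assms coord_subspace_coef_space[OF _ fin] unfolding dual_rep_def by blast
qed

lemma dual_rep_mrank:
  assumes "dual_rep A B K E"
  shows "mrank A K E = 0 \<longleftrightarrow> mrank B {0\<^sub>v (dim_row B)} E = card E"
  using assms all_loops_iff_orth_on_indep[OF dual_rep_coord_subspace(2)[OF assms]]
  unfolding mrank_eq_0_iff[OF dual_rep_coord_subspace(1)[OF assms]]
    mrank_eq_card_iff[OF dual_rep_coord_subspace(1)[OF assms]] dual_rep_def
  by simp

lemma dual_rep_mconnected:
  assumes "dual_rep A B K E"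
  shows "mconnected A K E \<longleftrightarrow> mconnected B {0\<^sub>v (dim_row B)} E"
  using assms supp_connected_orth_on_iff[OF dual_rep_coord_subspace(2)[OF assms]]
  unfolding mconnected_iff_supp_connected[OF dual_rep_coord_subspace(1)[OF assms] subset_refl]
    dual_rep_def
  by simp

lemma dual_rep_mcomponent:
  assumes "dual_rep A B K E"
  shows "mcomponent A K E C \<longleftrightarrow> mcomponent B {0\<^sub>v (dim_row B)} E C"
  using assms supp_component_orth_on_iff[OF dual_rep_coord_subspace(2)[OF assms]]
  unfolding mcomponent_iff_supp_component[OF dual_rep_coord_subspace(1)[OF assms]] dual_rep_def
  by simp

lemma dual_rep_restrict_mcomponent:
  assumes I: "dual_rep A B K E" and C: "mcomponent A K E C"
  shows "dual_rep A B K C"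
proof -
  let ?X = "coef_space A K E"
  note fin = dual_rep_coord_subspace(1)[OF I] and X = dual_rep_coord_subspace(2)[OF I]
  have comp: "supp_component ?X E C" using C unfolding mcomponent_iff_supp_component[OF fin] .
  then have CE: "C \<subseteq> E" unfolding supp_component_def by blast
  have "coef_space B {0\<^sub>v (dim_row B)} C = {y \<in> coef_space B {0\<^sub>v (dim_row B)} E. supp_in y C}"
    by (rule coef_space_subset[OF fin CE])
  also have "\<dots> = {y \<in> orth_on E ?X. supp_in y C}" using I unfolding dual_rep_def by simp
  also have "\<dots> = orth_on C {x \<in> ?X. supp_in x C}"
    by (rule orth_on_restrict_separator[OF X supp_component_separator[OF X comp] CE, symmetric])
  also have "{x \<in> ?X. supp_in x C} = coef_space A K C"
    by (rule coef_space_subset[OF fin CE, symmetric])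
  finally show ?thesis using I CE unfolding dual_rep_def by auto
qed

lemma dual_rep_add_span_append_row:
  assumes I: "dual_rep A B K E" and u: "u \<in> carrier_vec (dim_col B)"
    and K': "vec_subspace (dim_row A) K'"
    and eq: "coef_space A K' E = span_insert (coef_space A K E) w"
    and w: "\<And>i. i \<in> E \<Longrightarrow> w i = u $ i"
  shows "dual_rep A (B @\<^sub>r mat_of_rows (dim_col B) [u]) K' E"
proof -
  let ?B = "B @\<^sub>r mat_of_rows (dim_col B) [u]"
  have E: "E \<subseteq> {0..<dim_col B}" using I unfolding dual_rep_def by auto
  have "coef_space ?B {0\<^sub>v (dim_row ?B)} E =
      {y \<in> coef_space B {0\<^sub>v (dim_row B)} E. (\<Sum>i\<in>E. y i * u $ i) = 0}"
    by (rule coef_space_append_row[OF u E])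
  also have "\<dots> = {y \<in> orth_on E (coef_space A K E). dot_on E w y = 0}"
  proof -
    have "(\<Sum>i\<in>E. y i * u $ i) = dot_on E w y" for y
      unfolding dot_on_def using w by (intro sum.cong) auto
    then show ?thesis using I unfolding dual_rep_def by simp
  qed
  also have "\<dots> = orth_on E (coef_space A K' E)"
    unfolding eq by (rule orth_on_span_insert[OF dual_rep_coord_subspace(2)[OF I], symmetric])
  finally show ?thesis using I K' unfolding dual_rep_def append_rows_def by auto
qed

lemma csd_le_imp_dsd_le:
  assumes "csd_le A K E d" shows "dual_rep A B K E \<Longrightarrow> dsd_le B E d"
  using assms
proof (induction arbitrary: B rule: csd_le.induct)
  case (rank0 K E d)
  then show ?case using dual_rep_mrank dsd_le.indep by blast
next
  case (disc K E d)
  show ?case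
  proof (rule dsd_le.disc)
    show "mrank B {0\<^sub>v (dim_row B)} E \<noteq> card E" "\<not> mconnected B {0\<^sub>v (dim_row B)} E"
      using disc.hyps(1,2) dual_rep_mrank[OF disc.prems] dual_rep_mconnected[OF disc.prems] by simp_all
    show "\<forall>C. mcomponent B {0\<^sub>v (dim_row B)} E C \<longrightarrow> dsd_le B C d"
      using disc.IH disc.prems dual_rep_mcomponent dual_rep_restrict_mcomponent by blast
  qed
next
  case (conn K E v d)
  have K: "vec_subspace (dim_row A) K" and E: "E \<subseteq> {0..<dim_col A}" and dc: "dim_col B = dim_col A"
    using conn.prems unfolding dual_rep_def by auto
  obtain w where w: "coef_space A (add_span K v) E = span_insert (coef_space A K E) w"
    using coef_space_add_span_obtain[OF K conn.hyps(3)] .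
  define u where "u = vec (dim_col B) w"
  have "dual_rep A (B @\<^sub>r mat_of_rows (dim_col B) [u]) (add_span K v) E"
    using E dc unfolding u_def
    by (intro dual_rep_add_span_append_row[OF conn.prems _ vec_subspace_add_span[OF K conn.hyps(3)] w])
      auto
  then have "dsd_le (B @\<^sub>r mat_of_rows (dim_col B) [u]) E d" by (rule conn.IH)
  moreover have "mrank B {0\<^sub>v (dim_row B)} E \<noteq> card E" "mconnected B {0\<^sub>v (dim_row B)} E"
    using conn.hyps(1,2) dual_rep_mrank[OF conn.prems] dual_rep_mconnected[OF conn.prems] by simp_all
  ultimately show ?case using dsd_le.conn[of B E u d] unfolding u_def by simp
qed

lemma dsd_le_imp_csd_le:
  assumes "dsd_le B E d" shows "dual_rep A B K E \<Longrightarrow> csd_le A K E d"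
  using assms
proof (induction arbitrary: K rule: dsd_le.induct)
  case (indep B E d)
  then show ?case using dual_rep_mrank csd_le.rank0 by blast
next
  case (disc B E d)
  show ?case
  proof (rule csd_le.disc)
    show "mrank A K E \<noteq> 0" "\<not> mconnected A K E"
      using disc.hyps(1,2) dual_rep_mrank[OF disc.prems] dual_rep_mconnected[OF disc.prems] by simp_all
    show "\<forall>C. mcomponent A K E C \<longrightarrow> csd_le A K C d"
      using disc.IH disc.prems dual_rep_mcomponent dual_rep_restrict_mcomponent by blast
  qed
next
  case (conn B E u d)
  have K: "vec_subspace (dim_row A) K" using conn.prems unfolding dual_rep_def by auto
  define v where "v = lincomb_cols A (\<lambda>i. u $ i) E"
  have "dual_rep A (B @\<^sub>r mat_of_rows (dim_col B) [u]) (add_span K v) E"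
    unfolding v_def
    by (rule dual_rep_add_span_append_row[OF conn.prems conn.hyps(3)
          vec_subspace_add_span[OF K lincomb_cols_carrier] coef_space_add_span_lincomb[OF K]])
      (simp add: restr0_def)
  then have "csd_le A (add_span K v) E d" by (rule conn.IH)
  moreover have "mrank A K E \<noteq> 0" "mconnected A K E"
    using conn.hyps(1,2) dual_rep_mrank[OF conn.prems] dual_rep_mconnected[OF conn.prems] by simp_all
  ultimately show ?case using csd_le.conn[of A K E v d] unfolding v_def by simp
qed

theorem theorem2:
  fixes A B :: "'a::field mat" and n :: nat
  assumes "dim_col A = n" and "dim_col B = n"
    and "row_space B = orth_compl n (row_space A)"
  shows "csd A = dsd B"
proof -
  let ?E = "{0..<n}"
  have "coef_space B {0\<^sub>v (dim_row B)} ?E = orth_on ?E (coef_space A {0\<^sub>v (dim_row A)} ?E)"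
    unfolding coef_space_zero_eq_orth_compl[OF assms(1)] coef_space_zero_eq_orth_compl[OF assms(2)]
    using orth_on_vec_preimage[of "row_space B" n] row_space_carrier[of B] assms by simp
  then have "dual_rep A B {0\<^sub>v (dim_row A)} ?E"
    using vec_subspace_zero assms(1,2) unfolding dual_rep_def by auto
  then have "csd_le A {0\<^sub>v (dim_row A)} {0..<dim_col A} d \<longleftrightarrow> dsd_le B {0..<dim_col B} d" for d
    using csd_le_imp_dsd_le dsd_le_imp_csd_le assms(1,2) by metis
  then have "csd_le A {0\<^sub>v (dim_row A)} {0..<dim_col A} = dsd_le B {0..<dim_col B}" by (rule ext)
  then show ?thesis unfolding csd_def dsd_def by simp
qed

end
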